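(* Every prime tournament which is not isomorphic to $P_n$ for any $n$ has at most one matching ordering.
   Context: A tournament is a finite, non-null, loopless directed graph in which for any two distinct vertices $u,v$ there is exactly one edge with both ends in $\{u,v\}$; write $u\to v$ for the edge from $u$ to $v$. A homogeneous set of $G$ is a set $X\subseteq V(G)$ such that each vertex outside $X$ either has edges to all of $X$ or edges from all of $X$; $G$ is prime if every homogeneous set $X$ has $|X|\le1$ or $X=V(G)$. Given an ordering $v_1,\dots,v_n$ of the vertices, a backedge is an edge $v_j\to v_i$ with $j>i$; the ordering is a matching ordering if every vertex is the head or tail of at most one backedge. $P_n$ is the tournament on $v_1,\dots,v_n$ with $v_i\to v_j$ if $j-i\ge2$ and $v_{i+1}\to v_i$ for $1\le i\le n-1$. *)

theory Defs
  imports Main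
begin

text \<open>A tournament is given by a vertex set V and an edge predicate E, where E u v means u \<rightarrow> v.
  Only the restriction of E to V matters.\<close>

definition tournament :: "'a set \<Rightarrow> ('a \<Rightarrow> 'a \<Rightarrow> bool) \<Rightarrow> bool" where
  "tournament V E \<longleftrightarrow> finite V \<and> V \<noteq> {} \<and>
     (\<forall>v\<in>V. \<not> E v v) \<and>
     (\<forall>u\<in>V. \<forall>v\<in>V. u \<noteq> v \<longrightarrow> (E u v \<longleftrightarrow> \<not> E v u))"

definition homogeneous_set :: "'a set \<Rightarrow> ('a \<Rightarrow> 'a \<Rightarrow> bool) \<Rightarrow> 'a set \<Rightarrow> bool" where
  "homogeneous_set V E X \<longleftrightarrow> X \<subseteq> V \<and>
     (\<forall>v\<in>V - X. (\<forall>x\<in>X. E v x) \<or> (\<forall>x\<in>X. E x v))"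

definition prime_tournament :: "'a set \<Rightarrow> ('a \<Rightarrow> 'a \<Rightarrow> bool) \<Rightarrow> bool" where
  "prime_tournament V E \<longleftrightarrow> tournament V E \<and>
     (\<forall>X. homogeneous_set V E X \<longrightarrow> card X \<le> 1 \<or> X = V)"

text \<open>An ordering v_1,...,v_n of V is a list of the vertices without repetition
  (0-indexed). A backedge is a pair of positions (i,j), i<j, with vs!j \<rightarrow> vs!i.\<close>

definition ordering_of :: "'a set \<Rightarrow> 'a list \<Rightarrow> bool" where
  "ordering_of V vs \<longleftrightarrow> distinct vs \<and> set vs = V"

definition backedges :: "('a \<Rightarrow> 'a \<Rightarrow> bool) \<Rightarrow> 'a list \<Rightarrow> (nat \<times> nat) set" where
  "backedges E vs = {(i, j). i < j \<and> j < length vs \<and> E (vs ! j) (vs ! i)}"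

definition matching_ordering :: "'a set \<Rightarrow> ('a \<Rightarrow> 'a \<Rightarrow> bool) \<Rightarrow> 'a list \<Rightarrow> bool" where
  "matching_ordering V E vs \<longleftrightarrow> ordering_of V vs \<and>
     (\<forall>k < length vs. card {(i, j) \<in> backedges E vs. i = k \<or> j = k} \<le> 1)"

definition P_edge :: "nat \<Rightarrow> nat \<Rightarrow> bool" where
  "P_edge i j \<longleftrightarrow> i + 2 \<le> j \<or> i = j + 1"

definition iso_to_P :: "'a set \<Rightarrow> ('a \<Rightarrow> 'a \<Rightarrow> bool) \<Rightarrow> nat \<Rightarrow> bool" where
  "iso_to_P V E n \<longleftrightarrow> (\<exists>f. bij_betw f {0..<n} V \<and>
     (\<forall>i<n. \<forall>j<n. E (f i) (f j) \<longleftrightarrow> P_edge i j))"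

end

theory Submission
  imports Defs
begin

text \<open>Compare two matching orderings through their position maps p and q. Call a pair inverted
  if p and q order it differently; since the edge between the two vertices is fixed, this happens
  exactly when the pair is a backedge of one ordering but not of the other, so every vertex has at
  most two inversion partners. In a prime tournament with at least three vertices no backedge joins
  consecutive positions, and the component of an inverted pair in the inversion graph is an interval
  of p that no backedge leaves; hence it is homogeneous and therefore all of V. Consequently, if the
  two orderings differ, each p-backedge x y with p x < p y satisfies q x = q y + 1, so p + q
  strictly increases along it, and listing V by increasing p + q makes the inverted pairs exactly
  the consecutive pairs, the backward edges of P_n, while every other edge points forward.\<close>

definition is_backedge :: "'a set \<Rightarrow> ('a \<Rightarrow> 'a \<Rightarrow> bool) \<Rightarrow> ('a \<Rightarrow> nat) \<Rightarrow> 'a \<Rightarrow> 'a \<Rightarrow> bool" where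
  "is_backedge V E r x y \<longleftrightarrow> x \<in> V \<and> y \<in> V \<and> (r x < r y \<and> E y x \<or> r y < r x \<and> E x y)"

definition inverted :: "'a set \<Rightarrow> ('a \<Rightarrow> nat) \<Rightarrow> ('a \<Rightarrow> nat) \<Rightarrow> 'a \<Rightarrow> 'a \<Rightarrow> bool" where
  "inverted V p q x y \<longleftrightarrow> x \<in> V \<and> y \<in> V \<and> x \<noteq> y \<and>
     \<not> (p x < p y \<and> q x < q y) \<and> \<not> (p y < p x \<and> q y < q x)"

lemma is_backedge_sym: "is_backedge V E r x y \<longleftrightarrow> is_backedge V E r y x"
  by (auto simp: is_backedge_def)

lemma inverted_sym: "inverted V p q x y \<longleftrightarrow> inverted V p q y x"
  by (auto simp: inverted_def)

lemma inverted_swap: "inverted V q p = inverted V p q"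
  unfolding inverted_def by (intro ext) blast

lemma rtranclp_exits_set:
  assumes "r\<^sup>*\<^sup>* a b" "a \<in> X" "b \<notin> X"
  shows "\<exists>c d. c \<in> X \<and> d \<notin> X \<and> r c d"
  using assms
proof (induction rule: rtranclp_induct)
  case (step m b)
  then show ?case by (cases "m \<in> X") auto
qed simp

lemma tournament_edge_iff:
  "tournament V E \<Longrightarrow> x \<in> V \<Longrightarrow> y \<in> V \<Longrightarrow> x \<noteq> y \<Longrightarrow> E x y \<longleftrightarrow> \<not> E y x"
  unfolding tournament_def by blast

lemma prime_tournament_homogeneous_eq:
  assumes "prime_tournament V E" "homogeneous_set V E X" "2 \<le> card X"
  shows "X = V"
proof -
  have "card X \<le> 1 \<or> X = V" using assms(1,2) unfolding prime_tournament_def by blast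
  then show ?thesis using assms(3) by linarith
qed

lemma edge_iff_less_if_not_backedge:
  assumes "tournament V E" "inj_on r V" "x \<in> V" "y \<in> V" "x \<noteq> y" "\<not> is_backedge V E r x y"
  shows "E x y \<longleftrightarrow> r x < r y"
proof -
  have "r x \<noteq> r y" using inj_onD[OF assms(2) _ assms(3,4)] assms(5) by blast
  then consider "r x < r y" | "r y < r x" by linarith
  then show ?thesis
    using assms(3,4,6) tournament_edge_iff[OF assms(1,3,4,5)] unfolding is_backedge_def
    by cases blast+
qed

lemma convex_homogeneous_set:
  assumes tour: "tournament V E" and inj: "inj_on r V" and XV: "X \<subseteq> V"
    and convex: "\<And>a b w. a \<in> X \<Longrightarrow> b \<in> X \<Longrightarrow> w \<in> V \<Longrightarrow> r a < r w \<Longrightarrow> r w < r b \<Longrightarrow> w \<in> X"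
    and closed: "\<And>x w. x \<in> X \<Longrightarrow> w \<in> V - X \<Longrightarrow> \<not> is_backedge V E r w x"
  shows "homogeneous_set V E X"
  unfolding homogeneous_set_def
proof (intro conjI ballI XV)
  fix w assume w: "w \<in> V - X"
  have edge: "E w x \<longleftrightarrow> r w < r x" if "x \<in> X" for x
    using edge_iff_less_if_not_backedge[OF tour inj] closed that w XV by blast
  show "(\<forall>x\<in>X. E w x) \<or> (\<forall>x\<in>X. E x w)"
  proof (cases "\<exists>a\<in>X. r a < r w")
    case True
    then obtain a where a: "a \<in> X" "r a < r w" by blast
    have "\<not> r w < r x" if "x \<in> X" for x
      using convex[OF a(1) that _ a(2)] w by blast
    then have "E x w" if "x \<in> X" for x
      using edge[OF that] that w XV tournament_edge_iff[OF tour] by blast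
    then show ?thesis by blast
  next
    case False
    then have "r w < r x" if "x \<in> X" for x
      using that w XV inj by (metis DiffD1 DiffD2 inj_onD linorder_neqE_nat subsetD)
    then show ?thesis using edge by blast
  qed
qed

definition position :: "'a list \<Rightarrow> 'a \<Rightarrow> nat" where
  "position vs = the_inv_into {..<length vs} ((!) vs)"

lemma
  assumes "ordering_of V vs"
  shows bij_betw_position: "bij_betw (position vs) V {..<length vs}"
    and nth_position: "x \<in> V \<Longrightarrow> vs ! position vs x = x"
proof -
  have b: "bij_betw ((!) vs) {..<length vs} V"
    using assms bij_betw_nth unfolding ordering_of_def by blast
  show "bij_betw (position vs) V {..<length vs}"
    unfolding position_def by (rule bij_betw_the_inv_into[OF b])
  show "x \<in> V \<Longrightarrow> vs ! position vs x = x"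
    unfolding position_def using f_the_inv_into_f_bij_betw[OF b] by blast
qed

lemma position_nth:
  assumes "ordering_of V vs" "i < length vs"
  shows "position vs (vs ! i) = i"
proof -
  have "vs ! i \<in> V" using assms nth_mem unfolding ordering_of_def by blast
  then have "vs ! position vs (vs ! i) = vs ! i" "position vs (vs ! i) < length vs"
    using nth_position[OF assms(1)] bij_betw_position[OF assms(1)] unfolding bij_betw_def by auto
  then show ?thesis using assms nth_eq_iff_index_eq unfolding ordering_of_def by blast
qed

lemma ordering_eq_if_position_eq:
  assumes vs: "ordering_of V vs" and ws: "ordering_of V ws"
    and eq: "\<And>x. x \<in> V \<Longrightarrow> position vs x = position ws x"
  shows "vs = ws"
proof (rule nth_equalityI)
  show len: "length vs = length ws" using vs ws distinct_card unfolding ordering_of_def by metis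
  fix i assume i: "i < length vs"
  have "vs ! i \<in> V" using vs i nth_mem unfolding ordering_of_def by blast
  then have "ws ! position ws (vs ! i) = vs ! i" by (rule nth_position[OF ws])
  then show "vs ! i = ws ! i" using eq[OF \<open>vs ! i \<in> V\<close>] position_nth[OF vs i] by simp
qed

lemma matching_ordering_backedge_unique:
  assumes m: "matching_ordering V E vs"
    and b1: "is_backedge V E (position vs) x y" and b2: "is_backedge V E (position vs) x z"
  shows "y = z"
proof -
  let ?p = "position vs"
  have ord: "ordering_of V vs" using m unfolding matching_ordering_def by blast
  note p = bij_betw_position[OF ord] nth_position[OF ord]
  define S where "S = {(i, j) \<in> backedges E vs. i = ?p x \<or> j = ?p x}"
  have xV: "x \<in> V" using b1 is_backedge_def by metis
  have pV: "?p w < length vs" if "w \<in> V" for w using p(1) that unfolding bij_betw_def by auto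
  have "card S \<le> 1" using m pV[OF xV] unfolding matching_ordering_def S_def by blast
  moreover have "finite S"
    by (rule finite_subset[of _ "{..<length vs} \<times> {..<length vs}"]) (auto simp: S_def backedges_def)
  moreover have mem: "(min (?p x) (?p w), max (?p x) (?p w)) \<in> S" "?p w \<noteq> ?p x"
    if "is_backedge V E ?p x w" for w
    using that p(2)[OF xV] p(2) pV unfolding S_def is_backedge_def backedges_def by auto
  ultimately have "(min (?p x) (?p y), max (?p x) (?p y)) = (min (?p x) (?p z), max (?p x) (?p z))"
    using mem[OF b1] mem[OF b2] card_le_Suc0_iff_eq by (metis One_nat_def)
  then have "?p y = ?p z" using mem(2)[OF b1] mem(2)[OF b2] by (auto simp: min_def max_def split: if_splits)
  then show "y = z" using p(2) b1 b2 is_backedge_def by metis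
qed

lemma card_less_position:
  assumes p: "bij_betw p V {..<n}" and x: "x \<in> V"
  shows "card {y \<in> V. p y < p x} = p x"
proof -
  have "p x < n" using p x unfolding bij_betw_def by auto
  then have "{..<p x} \<subseteq> p ` V" using p unfolding bij_betw_def by auto
  then have "p ` {y \<in> V. p y < p x} = {..<p x}" by (auto simp: image_iff)
  then have "bij_betw p {y \<in> V. p y < p x} {..<p x}"
    using bij_betw_subset[OF p] by (metis (no_types, lifting) mem_Collect_eq subsetI)
  then show ?thesis using bij_betw_same_card by force
qed

lemma positions_eq_if_no_inversion:
  assumes p: "bij_betw p V {..<n}" and q: "bij_betw q V {..<n}"
    and none: "\<And>x y. \<not> inverted V p q x y" and x: "x \<in> V"
  shows "p x = q x"
proof -
  have "p y < p x \<longleftrightarrow> q y < q x" if "y \<in> V" for y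
  proof (cases "y = x")
    case False
    then have "p y \<noteq> p x" "q y \<noteq> q x"
      using p q that x unfolding bij_betw_def by (meson inj_onD)+
    then show ?thesis using none[of x y] that x False unfolding inverted_def by auto
  qed simp
  then have "{y \<in> V. p y < p x} = {y \<in> V. q y < q x}" by blast
  then show ?thesis using card_less_position[OF p x] card_less_position[OF q x] by simp
qed

lemma small_tournament_iso_to_P:
  assumes t: "tournament V E" and c: "card V \<le> 2"
  shows "iso_to_P V E (card V)"
proof -
  have "finite V" "V \<noteq> {}" using t unfolding tournament_def by auto
  then have "card V = 1 \<or> card V = 2" using c by (simp add: le_Suc_eq numeral_2_eq_2 card_gt_0_iff)
  then show ?thesis
  proof
    assume "card V = 1"
    then obtain a where V: "V = {a}" by (auto simp: card_Suc_eq)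
    have "bij_betw (\<lambda>_. a) {0..<1::nat} V" by (auto simp: V bij_betw_def inj_on_def)
    then show ?thesis using t V unfolding iso_to_P_def tournament_def P_edge_def
      by (auto simp: \<open>card V = 1\<close> intro!: exI[of _ "\<lambda>_. a"])
  next
    assume "card V = 2"
    then obtain a b where V: "V = {a, b}" "a \<noteq> b" by (auto simp: card_Suc_eq numeral_2_eq_2)
    then have "E b a \<or> E a b" using t unfolding tournament_def by blast
    then obtain x y where xy: "V = {x, y}" "x \<noteq> y" "E y x" using V by blast
    define f where "f = (\<lambda>i::nat. if i = 0 then x else y)"
    have z: "{0..<2::nat} = {0, 1}" by auto
    have "bij_betw f {0..<2} V"
      unfolding bij_betw_def inj_on_def z xy using xy by (auto simp: f_def)
    moreover have "\<not> E x y" "\<not> E x x" "\<not> E y y"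
      using t xy unfolding tournament_def by auto
    then have "\<forall>i<2. \<forall>j<2. E (f i) (f j) \<longleftrightarrow> P_edge i j"
      using xy by (auto simp: f_def P_edge_def less_2_cases_iff)
    ultimately show ?thesis unfolding iso_to_P_def \<open>card V = 2\<close> by blast
  qed
qed

locale matching_order_pair =
  fixes V :: "'a set" and E :: "'a \<Rightarrow> 'a \<Rightarrow> bool" and p q :: "'a \<Rightarrow> nat" and n :: nat
  assumes prime: "prime_tournament V E" and three_le_n: "3 \<le> n"
    and p_bij: "bij_betw p V {..<n}" and q_bij: "bij_betw q V {..<n}"
    and p_matching: "\<And>x y z. is_backedge V E p x y \<Longrightarrow> is_backedge V E p x z \<Longrightarrow> y = z"
    and q_matching: "\<And>x y z. is_backedge V E q x y \<Longrightarrow> is_backedge V E q x z \<Longrightarrow> y = z"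
begin

abbreviation inv_pair :: "'a \<Rightarrow> 'a \<Rightarrow> bool" where
  "inv_pair \<equiv> inverted V p q"

lemma matching_order_pair_swap: "matching_order_pair V E q p n"
  using matching_order_pair_axioms unfolding matching_order_pair_def by blast

lemma tournament: "tournament V E"
  using prime unfolding prime_tournament_def by blast

lemma p_inj: "inj_on p V" and q_inj: "inj_on q V"
  using p_bij q_bij unfolding bij_betw_def by blast+

lemma q_less_n: "x \<in> V \<Longrightarrow> q x < n"
  using q_bij unfolding bij_betw_def by auto

lemma q_surj: "i < n \<Longrightarrow> \<exists>x\<in>V. q x = i"
  using q_bij unfolding bij_betw_def by (metis imageE lessThan_iff)

lemma card_V: "card V = n"
  using bij_betw_same_card[OF p_bij] by simp

lemma inverted_imp_vertices: "inv_pair x y \<Longrightarrow> x \<in> V \<and> y \<in> V \<and> x \<noteq> y"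
  by (simp add: inverted_def)

lemma inverted_rtranclp_sym: "inv_pair\<^sup>*\<^sup>* x y \<Longrightarrow> inv_pair\<^sup>*\<^sup>* y x"
  using inverted_sym sympD[OF symp_rtranclp, of inv_pair] by (metis sympI)

lemma inverted_iff_backedge_differs:
  assumes "x \<in> V" "y \<in> V" "x \<noteq> y"
  shows "inv_pair x y \<longleftrightarrow> (is_backedge V E p x y \<longleftrightarrow> \<not> is_backedge V E q x y)"
proof -
  have "p x \<noteq> p y" "q x \<noteq> q y" using p_inj q_inj assms by (metis inj_onD)+
  moreover have "E x y \<longleftrightarrow> \<not> E y x" using tournament_edge_iff[OF tournament assms] .
  ultimately show ?thesis
    using assms unfolding inverted_def is_backedge_def by (auto simp: linorder_neq_iff)
qed

lemma inverted_between:
  assumes "inv_pair x z" "y \<in> V" "p x < p y" "p y < p z"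
  shows "inv_pair x y \<or> inv_pair y z"
proof -
  have V: "x \<in> V" "z \<in> V" and "x \<noteq> z" using inverted_imp_vertices[OF assms(1)] by auto
  have "y \<noteq> x" "y \<noteq> z" using assms by auto
  then have "q y \<noteq> q x" "q y \<noteq> q z" using q_inj V assms(2) by (metis inj_onD)+
  moreover have "q z \<noteq> q x" using q_inj V \<open>x \<noteq> z\<close> by (metis inj_onD)
  then have "q z < q x" using assms(1,3,4) unfolding inverted_def by auto
  ultimately show ?thesis using assms V \<open>y \<noteq> x\<close> \<open>y \<noteq> z\<close> unfolding inverted_def by auto
qed

text \<open>Otherwise the two ends of the backedge would form a homogeneous pair.\<close>

lemma backedge_has_vertex_between:
  assumes b: "is_backedge V E p x y" and lt: "p x < p y"
  shows "\<exists>v\<in>V. p x < p v \<and> p v < p y"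
proof (rule ccontr)
  assume none: "\<not> ?thesis"
  have V: "x \<in> V" "y \<in> V" "x \<noteq> y" using b lt unfolding is_backedge_def by auto
  have "homogeneous_set V E {x, y}"
  proof (rule convex_homogeneous_set[OF tournament p_inj])
    show "{x, y} \<subseteq> V" using V by simp
    show "w \<in> {x, y}" if "a \<in> {x, y}" "b \<in> {x, y}" "w \<in> V" "p a < p w" "p w < p b" for a b w
      using that none lt by auto
    show "\<not> is_backedge V E p w z" if "z \<in> {x, y}" "w \<in> V - {x, y}" for z w
    proof
      assume "is_backedge V E p w z"
      then have "is_backedge V E p z w" using is_backedge_sym by metis
      moreover have "is_backedge V E p x y" "is_backedge V E p y x" using b is_backedge_sym by metis+
      ultimately show False using that p_matching by blast
    qed
  qed
  then have "{x, y} = V" using prime_tournament_homogeneous_eq[OF prime] V by simp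
  then show False using card_V three_le_n V by auto
qed

lemma inverted_path_convex:
  assumes "inv_pair\<^sup>*\<^sup>* a b" "w \<in> V" "p a < p w \<and> p w < p b \<or> p b < p w \<and> p w < p a"
  shows "inv_pair\<^sup>*\<^sup>* a w"
  using assms(1,3)
proof (induction rule: rtranclp_induct)
  case (step m b)
  have mV: "m \<in> V" using inverted_imp_vertices[OF step.hyps(2)] by blast
  have mb: "inv_pair m b" using step.hyps(2) .
  have bm: "inv_pair b m" using mb by (subst inverted_sym)
  have am: "inv_pair\<^sup>*\<^sup>* a m" and ab: "inv_pair\<^sup>*\<^sup>* a b" using step.hyps by auto
  consider "p w = p m" | "p a < p w \<and> p w < p m \<or> p m < p w \<and> p w < p a"
    | "p m < p w \<and> p w < p b" | "p b < p w \<and> p w < p m"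
    using step.prems by linarith
  then show ?case
  proof cases
    case 1
    then have "w = m" using inj_onD[OF p_inj _ assms(2) mV] by blast
    then show ?thesis using am by simp
  next
    case 2
    then show ?thesis by (rule step.IH)
  next
    case 3
    then have "inv_pair m w \<or> inv_pair b w"
      using inverted_between[OF mb assms(2)] by (simp add: inverted_sym[of _ _ _ w b])
    then show ?thesis using am ab by (auto intro: rtranclp.rtrancl_into_rtrancl)
  next
    case 4
    then have "inv_pair b w \<or> inv_pair m w"
      using inverted_between[OF bm assms(2)] by (simp add: inverted_sym[of _ _ _ w m])
    then show ?thesis using am ab by (auto intro: rtranclp.rtrancl_into_rtrancl)
  qed
qed auto

lemma inverted_imp_no_double_backedge:
  assumes "inv_pair y u" "is_backedge V E p y w" "is_backedge V E q y w"
  shows False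
proof -
  have "y \<in> V" "u \<in> V" "y \<noteq> u" using inverted_imp_vertices[OF assms(1)] by auto
  then have "is_backedge V E p y u \<longleftrightarrow> \<not> is_backedge V E q y u"
    using inverted_iff_backedge_differs assms(1) by blast
  then show False using assms(2,3) p_matching q_matching by metis
qed

lemma inverted_rtranclp_has_partner:
  assumes "inv_pair x0 y0" "inv_pair\<^sup>*\<^sup>* x0 y"
  shows "\<exists>u. inv_pair y u"
  using assms(2)
proof (cases rule: rtranclp.cases)
  case (rtrancl_into_rtrancl b)
  then show ?thesis using inverted_sym by metis
qed (use assms(1) in blast)

lemma inverted_reaches_all:
  assumes x0: "inv_pair x0 y0" and y: "y \<in> V"
  shows "inv_pair\<^sup>*\<^sup>* x0 y"
proof -
  define C where "C = {y. inv_pair\<^sup>*\<^sup>* x0 y}"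
  have x0C: "x0 \<in> C" and y0C: "y0 \<in> C" using x0 by (auto simp: C_def)
  have CV: "C \<subseteq> V"
  proof
    fix y assume "y \<in> C"
    then have "inv_pair\<^sup>*\<^sup>* x0 y" by (simp add: C_def)
    then show "y \<in> V"
      by (induction rule: rtranclp_induct) (use x0 inverted_imp_vertices in auto)
  qed
  have partner: "\<exists>u. inv_pair y u" if "y \<in> C" for y
    using inverted_rtranclp_has_partner[OF x0] that by (simp add: C_def)
  have "homogeneous_set V E C"
  proof (rule convex_homogeneous_set[OF tournament p_inj CV])
    fix a b w assume "a \<in> C" "b \<in> C" "w \<in> V" "p a < p w" "p w < p b"
    then have "inv_pair\<^sup>*\<^sup>* a b" using inverted_rtranclp_sym rtranclp_trans by (metis C_def mem_Collect_eq)
    then have "inv_pair\<^sup>*\<^sup>* a w" using inverted_path_convex \<open>w \<in> V\<close> \<open>p a < p w\<close> \<open>p w < p b\<close> by blast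
    then show "w \<in> C" using \<open>a \<in> C\<close> by (auto simp: C_def)
  next
    fix z w assume z: "z \<in> C" and w: "w \<in> V - C"
    show "\<not> is_backedge V E p w z"
    proof
      assume "is_backedge V E p w z"
      then have bp: "is_backedge V E p z w" using is_backedge_sym by metis
      have "\<not> inv_pair z w" using z w by (auto simp: C_def intro: rtranclp.rtrancl_into_rtrancl)
      then have "is_backedge V E q z w"
        using bp inverted_iff_backedge_differs z w CV by blast
      then show False using inverted_imp_no_double_backedge partner[OF z] bp by blast
    qed
  qed
  moreover have "2 \<le> card C"
  proof -
    have "{x0, y0} \<subseteq> C" using x0C y0C by simp
    moreover have "finite C" using CV tournament finite_subset unfolding tournament_def by blast
    ultimately have "card {x0, y0} \<le> card C" by (rule card_mono[rotated])
    then show ?thesis using inverted_imp_vertices[OF x0] by simp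
  qed
  ultimately have "C = V" using prime_tournament_homogeneous_eq[OF prime] by blast
  then show ?thesis using y unfolding C_def by blast
qed

end

sublocale matching_order_pair \<subseteq> swapped: matching_order_pair V E q p n
  by (rule matching_order_pair_swap)

locale inverted_matching_order_pair = matching_order_pair +
  assumes has_inversion: "\<exists>x y. inverted V p q x y"
begin

lemma inverted_matching_order_pair_swap: "inverted_matching_order_pair V E q p n"
  using matching_order_pair_swap has_inversion inverted_swap[of V q p]
  unfolding inverted_matching_order_pair_def inverted_matching_order_pair_axioms_def by simp

lemma swapped_inv_pair: "inverted V q p = inv_pair"
  by (rule inverted_swap)

lemma inverted_connected:
  assumes "x \<in> V" "y \<in> V"
  shows "inv_pair\<^sup>*\<^sup>* x y"
proof -
  obtain x0 y0 where "inv_pair x0 y0" using has_inversion by blast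
  then have "inv_pair\<^sup>*\<^sup>* x0 x" "inv_pair\<^sup>*\<^sup>* x0 y" using inverted_reaches_all assms by blast+
  then show ?thesis using inverted_rtranclp_sym rtranclp_trans by metis
qed

lemma has_inverted_partner: "x \<in> V \<Longrightarrow> \<exists>y. inv_pair x y"
  using has_inversion inverted_reaches_all inverted_rtranclp_has_partner by metis

lemma backedge_not_both: "is_backedge V E p x y \<Longrightarrow> \<not> is_backedge V E q x y"
  using has_inverted_partner inverted_imp_no_double_backedge unfolding is_backedge_def by metis

end

sublocale inverted_matching_order_pair \<subseteq> swapped: inverted_matching_order_pair V E q p n
  by (rule inverted_matching_order_pair_swap)

context inverted_matching_order_pair
begin

lemma inverted_iff_backedge: "inv_pair x y \<longleftrightarrow> is_backedge V E p x y \<or> is_backedge V E q x y"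
proof
  assume "inv_pair x y"
  then show "is_backedge V E p x y \<or> is_backedge V E q x y"
    using inverted_iff_backedge_differs inverted_imp_vertices by blast
next
  assume b: "is_backedge V E p x y \<or> is_backedge V E q x y"
  then have "x \<in> V" "y \<in> V" "x \<noteq> y" unfolding is_backedge_def by auto
  moreover have "is_backedge V E p x y \<longleftrightarrow> \<not> is_backedge V E q x y"
    using b backedge_not_both swapped.backedge_not_both by blast
  ultimately show "inv_pair x y" using inverted_iff_backedge_differs by blast
qed

lemma inverted_q_backedge_if_not_p_partner:
  assumes "is_backedge V E p x y" "inv_pair x u" "u \<noteq> y"
  shows "is_backedge V E q x u"
  using assms inverted_iff_backedge p_matching by blast

lemma q_order_of_p_backedge:
  assumes "is_backedge V E p x y" "p x < p y"
  shows "q y < q x"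
proof -
  have R: "inv_pair x y" using assms(1) inverted_iff_backedge by blast
  moreover have "q x \<noteq> q y" using inverted_imp_vertices[OF R] q_inj by (metis inj_onD)
  ultimately show ?thesis using assms(2) unfolding inverted_def by auto
qed

lemma crossing_q_backedges_absurd:
  assumes bxy: "is_backedge V E p x y" and v: "p x < p v" "p v < p y"
    and bxw: "is_backedge V E q x w" and byv: "is_backedge V E q y v"
    and w: "q y < q w" "q w < q x"
  shows False
proof -
  have V: "x \<in> V" "y \<in> V" "v \<in> V" "w \<in> V" "x \<noteq> y"
    using bxy bxw byv v unfolding is_backedge_def by auto
  have "v \<noteq> w" using bxw byv \<open>x \<noteq> y\<close> q_matching is_backedge_sym by metis
  have "\<not> inv_pair x v"
    using inverted_q_backedge_if_not_p_partner[OF bxy] q_matching[OF bxw] \<open>v \<noteq> w\<close> v by fastforce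
  then have qxv: "q x < q v"
    using V v q_inj unfolding inverted_def by (metis inj_onD less_asym linorder_neqE_nat)
  have byx: "is_backedge V E p y x" using bxy is_backedge_sym by metis
  have "\<not> inv_pair y w"
    using inverted_q_backedge_if_not_p_partner[OF byx] q_matching[OF byv] \<open>v \<noteq> w\<close> w by fastforce
  then have pyw: "p y < p w"
    using V w p_inj unfolding inverted_def by (metis inj_onD less_asym linorder_neqE_nat)
  have bwx: "is_backedge V E q w x" using bxw is_backedge_sym by metis
  have "inv_pair w v" using V v w qxv pyw unfolding inverted_def by auto
  moreover have "\<not> is_backedge V E q w v" using q_matching[OF bwx] v by auto
  ultimately have bwv: "is_backedge V E p w v" using inverted_iff_backedge by blast
  obtain u where u: "u \<in> V" "q w < q u" "q u < q x"
    using swapped.backedge_has_vertex_between[OF bwx w(2)] by blast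
  have "inv_pair w u \<or> inv_pair u x"
    using swapped.inverted_between[of w x u] bxw w u inverted_iff_backedge
    unfolding swapped_inv_pair by (metis is_backedge_sym)
  moreover have "\<not> inv_pair u x"
  proof
    assume "inv_pair u x"
    then have "is_backedge V E p x u \<or> is_backedge V E q x u"
      using inverted_iff_backedge inverted_sym by metis
    then show False using p_matching[OF bxy] q_matching[OF bxw] u w by auto
  qed
  ultimately have "is_backedge V E p w u \<or> is_backedge V E q w u"
    using inverted_iff_backedge by blast
  then have "is_backedge V E p w u" using q_matching[OF bwx] u by auto
  then have "u = v" using p_matching[OF bwv] by blast
  then show False using u qxv by simp
qed

lemma p_backedge_q_consecutive:
  assumes bxy: "is_backedge V E p x y" and lt: "p x < p y"
  shows "q x = Suc (q y)"
proof (rule ccontr)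
  assume ne: "q x \<noteq> Suc (q y)"
  have V: "x \<in> V" "y \<in> V" "x \<noteq> y" using bxy lt unfolding is_backedge_def by auto
  have byx: "is_backedge V E p y x" using bxy is_backedge_sym by metis
  have Rxy: "inv_pair x y" using bxy inverted_iff_backedge by blast
  have sq: "Suc (q y) < q x" using q_order_of_p_backedge[OF bxy lt] ne by linarith
  obtain v where v: "v \<in> V" "p x < p v" "p v < p y"
    using backedge_has_vertex_between[OF bxy lt] by blast
  obtain w where w: "w \<in> V" "q w = Suc (q y)"
    using q_surj q_less_n[OF V(1)] sq by (meson less_trans)
  have "inv_pair x v \<or> inv_pair v y" using inverted_between[OF Rxy v] .
  then have bv: "is_backedge V E q x v \<or> is_backedge V E q y v"
    using inverted_q_backedge_if_not_p_partner[OF bxy] inverted_q_backedge_if_not_p_partner[OF byx]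
      inverted_sym v by (metis less_irrefl)
  have "inverted V q p y w \<or> inverted V q p w x"
    using swapped.inverted_between[of y x w] Rxy w sq inverted_sym[of V p q x y]
    unfolding swapped_inv_pair by simp
  then have bw: "is_backedge V E q y w \<or> is_backedge V E q x w"
    using inverted_q_backedge_if_not_p_partner[OF bxy] inverted_q_backedge_if_not_p_partner[OF byx]
      inverted_sym w sq unfolding swapped_inv_pair by (metis less_irrefl n_not_Suc_n)
  have "v \<noteq> w"
  proof
    assume "v = w"
    then have "inv_pair x v" "inv_pair y v" using V v w sq unfolding inverted_def by auto
    then have "is_backedge V E q v x" "is_backedge V E q v y"
      using inverted_q_backedge_if_not_p_partner[OF bxy] inverted_q_backedge_if_not_p_partner[OF byx]
        v is_backedge_sym by (metis less_irrefl)+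
    then show False using q_matching V(3) by metis
  qed
  from bv show False
  proof
    assume "is_backedge V E q x v"
    then have "is_backedge V E q y w" using bw q_matching \<open>v \<noteq> w\<close> by metis
    then show False using swapped.backedge_has_vertex_between w by fastforce
  next
    assume byv: "is_backedge V E q y v"
    then have "is_backedge V E q x w" using bw q_matching \<open>v \<noteq> w\<close> by metis
    then show False using crossing_q_backedges_absurd[OF bxy v(2,3) _ byv, of w] w sq by simp
  qed
qed

definition pos_sum :: "'a \<Rightarrow> nat" where
  "pos_sum x = p x + q x"

lemma pos_sum_less_if_p_backedge:
  assumes "is_backedge V E p x y" "p x < p y"
  shows "pos_sum x < pos_sum y"
proof -
  obtain v where "v \<in> V" "p x < p v" "p v < p y"
    using backedge_has_vertex_between[OF assms] by blast
  then show ?thesis using p_backedge_q_consecutive[OF assms] by (simp add: pos_sum_def)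
qed

lemma edge_iff_pos_sum_if_p_backedge:
  assumes b: "is_backedge V E p x y"
  shows "E x y \<longleftrightarrow> pos_sum y < pos_sum x"
proof -
  have V: "x \<in> V" "y \<in> V" "x \<noteq> y" using b unfolding is_backedge_def by auto
  have "p x \<noteq> p y" using V p_inj by (metis inj_onD)
  then consider "p x < p y" | "p y < p x" by linarith
  then show ?thesis
  proof cases
    case 1
    then have "E y x" using b unfolding is_backedge_def by auto
    then have "\<not> E x y" using tournament_edge_iff[OF tournament V] by blast
    then show ?thesis using pos_sum_less_if_p_backedge[OF b 1] by simp
  next
    case 2
    then have "E x y" using b unfolding is_backedge_def by auto
    moreover have "is_backedge V E p y x" using b is_backedge_sym by metis
    ultimately show ?thesis using pos_sum_less_if_p_backedge 2 by blast
  qed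
qed

end

text \<open>Re-entering the context makes the swapped copies of the lemmas above available.\<close>

context inverted_matching_order_pair
begin

lemma swapped_pos_sum: "swapped.pos_sum = pos_sum"
  by (simp add: fun_eq_iff pos_sum_def swapped.pos_sum_def)

lemma edge_iff_pos_sum_if_inverted:
  assumes "inv_pair x y"
  shows "E x y \<longleftrightarrow> pos_sum y < pos_sum x"
  using assms inverted_iff_backedge edge_iff_pos_sum_if_p_backedge
    swapped.edge_iff_pos_sum_if_p_backedge[unfolded swapped_pos_sum] by blast

lemma edge_iff_pos_sum_if_not_inverted:
  assumes "x \<in> V" "y \<in> V" "x \<noteq> y" "\<not> inv_pair x y"
  shows "E x y \<longleftrightarrow> pos_sum x < pos_sum y"
proof -
  have "\<not> is_backedge V E p x y" using assms(4) inverted_iff_backedge by blast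
  then have e: "E x y \<longleftrightarrow> p x < p y" using edge_iff_less_if_not_backedge[OF tournament p_inj] assms by blast
  have "p x \<noteq> p y" using assms p_inj by (metis inj_onD)
  then show ?thesis using e assms unfolding inverted_def pos_sum_def by (auto simp: linorder_neq_iff)
qed

lemma pos_sum_inj: "inj_on pos_sum V"
proof (rule inj_onI, rule ccontr)
  fix x y assume xy: "x \<in> V" "y \<in> V" "pos_sum x = pos_sum y" "x \<noteq> y"
  have "inv_pair x y \<longleftrightarrow> inv_pair y x" by (rule inverted_sym)
  then have "\<not> E x y \<and> \<not> E y x"
    using xy edge_iff_pos_sum_if_inverted edge_iff_pos_sum_if_not_inverted by (metis less_irrefl)
  then show False using tournament_edge_iff[OF tournament xy(1,2,4)] by blast
qed

lemma no_inverted_triangle: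
  assumes "inv_pair a b" "inv_pair b c" "inv_pair a c"
  shows False
proof -
  have ne: "a \<noteq> b" "b \<noteq> c" "a \<noteq> c" using assms inverted_imp_vertices by auto
  have "is_backedge V E r a b \<Longrightarrow> is_backedge V E r b c \<Longrightarrow> False"
    if "r = p \<or> r = q" for r
    using that p_matching q_matching is_backedge_sym ne by metis
  moreover have "is_backedge V E r a b \<Longrightarrow> is_backedge V E r a c \<Longrightarrow> False"
    if "r = p \<or> r = q" for r
    using that p_matching q_matching ne by metis
  moreover have "is_backedge V E r b c \<Longrightarrow> is_backedge V E r a c \<Longrightarrow> False"
    if "r = p \<or> r = q" for r
    using that p_matching q_matching is_backedge_sym ne by metis
  ultimately show False using assms inverted_iff_backedge by metis
qed

text \<open>Otherwise a and b would be inverted as well, giving an inverted triangle.\<close>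

lemma inverted_partners_same_side:
  assumes "inv_pair y a" "inv_pair y b" "a \<noteq> b"
  shows "p y < p a \<longleftrightarrow> p y < p b"
proof (rule ccontr)
  assume h: "\<not> ?thesis"
  have V: "a \<in> V" "b \<in> V" "y \<in> V" "a \<noteq> y" "b \<noteq> y"
    using assms inverted_imp_vertices by auto
  have "p a \<noteq> p y" "p b \<noteq> p y" "q a \<noteq> q y" "q b \<noteq> q y"
    using V p_inj q_inj by (metis inj_onD)+
  then have "inv_pair a b \<or> inv_pair b a"
    using h assms V unfolding inverted_def by auto
  then show False using no_inverted_triangle assms inverted_sym by metis
qed

lemma inverted_partners_straddle:
  assumes "inv_pair y a" "inv_pair y b" "a \<noteq> b"
  shows "pos_sum a < pos_sum y \<longleftrightarrow> pos_sum y < pos_sum b"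
proof -
  have key: "pos_sum a < pos_sum y \<longleftrightarrow> pos_sum y < pos_sum b"
    if ba: "is_backedge V E p y a" and bb: "is_backedge V E q y b" and ya: "inv_pair y a"
      and yb: "inv_pair y b" and ab: "a \<noteq> b" for a b
  proof -
    have side: "p y < p a \<longleftrightarrow> p y < p b" using inverted_partners_same_side[OF ya yb ab] .
    have V: "a \<in> V" "b \<in> V" "y \<in> V" "a \<noteq> y" "b \<noteq> y"
      using ya yb inverted_imp_vertices by auto
    have "p a \<noteq> p y" "p b \<noteq> p y" using V p_inj by (metis inj_onD)+
    then consider "p y < p a" "p y < p b" | "p a < p y" "p b < p y" using side by linarith
    then show ?thesis
    proof cases
      case 1
      then have "q b < q y" using yb V q_inj unfolding inverted_def by (metis inj_onD linorder_neqE_nat)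
      then show ?thesis
        using pos_sum_less_if_p_backedge[OF ba 1(1)] 1
          swapped.pos_sum_less_if_p_backedge[unfolded swapped_pos_sum, of b y] bb is_backedge_sym
        by (metis less_asym)
    next
      case 2
      then have "q y < q b" using yb V q_inj unfolding inverted_def by (metis inj_onD linorder_neqE_nat)
      then show ?thesis
        using pos_sum_less_if_p_backedge[of a y] ba is_backedge_sym 2
          swapped.pos_sum_less_if_p_backedge[unfolded swapped_pos_sum, OF bb]
        by metis
    qed
  qed
  have "is_backedge V E p y a \<and> is_backedge V E q y b \<or> is_backedge V E p y b \<and> is_backedge V E q y a"
    using assms inverted_iff_backedge p_matching q_matching by metis
  then show ?thesis
  proof
    assume "is_backedge V E p y b \<and> is_backedge V E q y a"
    then have "pos_sum b < pos_sum y \<longleftrightarrow> pos_sum y < pos_sum a" using key assms by blast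
    moreover have "pos_sum a \<noteq> pos_sum y" "pos_sum b \<noteq> pos_sum y"
      using assms inverted_imp_vertices pos_sum_inj by (metis inj_onD)+
    ultimately show ?thesis by linarith
  qed (use key assms in blast)
qed

lemma inverted_between_pos_sum:
  assumes "inv_pair x z" "w \<in> V" "pos_sum x < pos_sum w" "pos_sum w < pos_sum z"
  shows "inv_pair x w \<or> inv_pair w z"
proof (rule ccontr)
  assume h: "\<not> ?thesis"
  have "x \<in> V" "z \<in> V" "w \<noteq> x" "w \<noteq> z" using assms inverted_imp_vertices by auto
  then have "p x < p w \<and> q x < q w" "p w < p z \<and> q w < q z"
    using h assms unfolding inverted_def pos_sum_def by auto
  then show False using assms(1) unfolding inverted_def by auto
qed

lemma inverted_imp_no_pos_sum_between:
  assumes "inv_pair x y" "pos_sum x < pos_sum y" "w \<in> V"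
  shows "\<not> (pos_sum x < pos_sum w \<and> pos_sum w < pos_sum y)"
proof
  assume w: "pos_sum x < pos_sum w \<and> pos_sum w < pos_sum y"
  then have "w \<noteq> x" "w \<noteq> y" by auto
  have "inv_pair x w \<or> inv_pair w y" using inverted_between_pos_sum[OF assms(1,3)] w by blast
  then show False
  proof
    assume "inv_pair x w"
    then show False using inverted_partners_straddle[OF _ assms(1) \<open>w \<noteq> y\<close>] w by auto
  next
    assume "inv_pair w y"
    then have "inv_pair y w" "inv_pair y x" using assms(1) inverted_sym by metis+
    then show False using inverted_partners_straddle[OF _ _ \<open>w \<noteq> x\<close>] w assms(2) by auto
  qed
qed

text \<open>A path in the connected inversion graph must cross the gap, and an inverted pair
  cannot jump over a vertex.\<close>

lemma inverted_if_no_pos_sum_between: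
  assumes V: "x \<in> V" "y \<in> V" and lt: "pos_sum x < pos_sum y"
    and gap: "\<And>w. w \<in> V \<Longrightarrow> \<not> (pos_sum x < pos_sum w \<and> pos_sum w < pos_sum y)"
  shows "inv_pair x y"
proof -
  define X where "X = {w. pos_sum w \<le> pos_sum x}"
  obtain c d where cd: "c \<in> X" "d \<notin> X" "inv_pair c d"
    using rtranclp_exits_set[OF inverted_connected[OF V], of X] lt by (auto simp: X_def)
  have cdV: "c \<in> V" "d \<in> V" using inverted_imp_vertices[OF cd(3)] by auto
  have "pos_sum y \<le> pos_sum d" using gap[OF cdV(2)] cd(2) by (auto simp: X_def)
  then have cd_lt: "pos_sum c < pos_sum d" using cd(1) lt by (simp add: X_def)
  have "c = x"
  proof (rule ccontr)
    assume "c \<noteq> x"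
    then have "pos_sum c \<noteq> pos_sum x" using pos_sum_inj cdV V by (metis inj_onD)
    then have "pos_sum c < pos_sum x" using cd(1) by (simp add: X_def)
    then show False using inverted_imp_no_pos_sum_between[OF cd(3) cd_lt V(1)] lt \<open>pos_sum y \<le> pos_sum d\<close> by simp
  qed
  moreover have "d = y"
  proof (rule ccontr)
    assume "d \<noteq> y"
    then have "pos_sum d \<noteq> pos_sum y" using pos_sum_inj cdV V by (metis inj_onD)
    then have "pos_sum y < pos_sum d" using \<open>pos_sum y \<le> pos_sum d\<close> by simp
    then show False using inverted_imp_no_pos_sum_between[OF cd(3) cd_lt V(2)] lt cd(1) by (simp add: X_def)
  qed
  ultimately show ?thesis using cd(3) by simp
qed

lemma pos_sum_sorted_ordering:
  obtains us where "ordering_of V us" "length us = n"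
    "\<And>i j. i < j \<Longrightarrow> j < n \<Longrightarrow> pos_sum (us ! i) < pos_sum (us ! j)"
proof -
  have "finite V" using tournament unfolding tournament_def by blast
  then obtain L where L: "distinct L" "set L = V" using finite_distinct_list by blast
  define us where "us = sort_key pos_sum L"
  have us: "distinct us" "set us = V" "length us = n" "sorted (map pos_sum us)"
    using L card_V distinct_card[OF L(1)] unfolding us_def by auto
  have "pos_sum (us ! i) < pos_sum (us ! j)" if "i < j" "j < n" for i j
  proof -
    have "pos_sum (us ! i) \<le> pos_sum (us ! j)" using sorted_nth_mono[OF us(4), of i j] that us(3) by simp
    moreover have "us ! i \<noteq> us ! j" using us that nth_eq_iff_index_eq by fastforce
    then have "pos_sum (us ! i) \<noteq> pos_sum (us ! j)"
      using pos_sum_inj us that nth_mem by (metis inj_onD less_trans)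
    ultimately show ?thesis by simp
  qed
  then show ?thesis using that us unfolding ordering_of_def by blast
qed

lemma inverted_in_sorted_ordering_iff:
  assumes us: "ordering_of V us" "length us = n"
    and mono: "\<And>i j. i < j \<Longrightarrow> j < n \<Longrightarrow> pos_sum (us ! i) < pos_sum (us ! j)"
    and ij: "i < j" "j < n"
  shows "inv_pair (us ! i) (us ! j) \<longleftrightarrow> j = Suc i"
proof -
  have usV: "us ! k \<in> V" if "k < n" for k using us that nth_mem unfolding ordering_of_def by blast
  show ?thesis
  proof
    assume R: "inv_pair (us ! i) (us ! j)"
    show "j = Suc i"
    proof (rule ccontr)
      assume "j \<noteq> Suc i"
      then have "Suc i < j" using ij by simp
      then show False
        using inverted_imp_no_pos_sum_between[OF R mono[OF ij] usV[of "Suc i"]] mono ij by simp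
    qed
  next
    assume j: "j = Suc i"
    have "\<not> (pos_sum (us ! i) < pos_sum w \<and> pos_sum w < pos_sum (us ! j))" if "w \<in> V" for w
    proof -
      have "w \<in> set us" using that us(1) unfolding ordering_of_def by simp
      then obtain k where "k < n" "w = us ! k" using us(2) by (auto simp: in_set_conv_nth)
      then show ?thesis using mono j ij by (metis less_asym linorder_neqE_nat not_less_eq)
    qed
    then show "inv_pair (us ! i) (us ! j)"
      using inverted_if_no_pos_sum_between[OF usV usV mono[OF ij]] ij by simp
  qed
qed

lemma iso_to_P: "iso_to_P V E n"
proof -
  obtain us where us: "ordering_of V us" "length us = n"
    and mono: "\<And>i j. i < j \<Longrightarrow> j < n \<Longrightarrow> pos_sum (us ! i) < pos_sum (us ! j)"
    using pos_sum_sorted_ordering by blast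
  have usV: "us ! k \<in> V" if "k < n" for k using us that nth_mem unfolding ordering_of_def by blast
  have forward: "E (us ! i) (us ! j) \<longleftrightarrow> j \<noteq> Suc i"
    and backward: "E (us ! j) (us ! i) \<longleftrightarrow> j = Suc i" if ij: "i < j" "j < n" for i j
  proof -
    have inv: "inv_pair (us ! i) (us ! j) \<longleftrightarrow> j = Suc i"
      using inverted_in_sorted_ordering_iff[OF us mono ij] .
    have V: "us ! i \<in> V" "us ! j \<in> V" "us ! i \<noteq> us ! j" using usV mono ij by fastforce+
    show "E (us ! i) (us ! j) \<longleftrightarrow> j \<noteq> Suc i"
      using inv edge_iff_pos_sum_if_inverted edge_iff_pos_sum_if_not_inverted[OF V]
        mono[OF ij] by auto
    have "inv_pair (us ! j) (us ! i) \<longleftrightarrow> j = Suc i" using inv inverted_sym by metis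
    then show "E (us ! j) (us ! i) \<longleftrightarrow> j = Suc i"
      using edge_iff_pos_sum_if_inverted edge_iff_pos_sum_if_not_inverted[OF V(2,1) V(3)[symmetric]]
        mono[OF ij] by auto
  qed
  have "E (us ! i) (us ! j) \<longleftrightarrow> P_edge i j" if "i < n" "j < n" for i j
  proof (cases i j rule: linorder_cases)
    case equal
    have "\<not> E (us ! i) (us ! i)" using tournament usV[OF \<open>i < n\<close>] unfolding tournament_def by blast
    then show ?thesis using equal by (simp add: P_edge_def)
  qed (use forward backward that in \<open>auto simp: P_edge_def\<close>)
  moreover have "bij_betw ((!) us) {0..<n} V"
    using bij_betw_nth[of us "{0..<n}" V] us unfolding ordering_of_def by (simp add: atLeast0LessThan)
  ultimately show ?thesis unfolding iso_to_P_def by blast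
qed

end

theorem corollary5p5:
  fixes V :: "'a set" and E :: "'a \<Rightarrow> 'a \<Rightarrow> bool"
  assumes "prime_tournament V E"
    and "\<forall>n. \<not> iso_to_P V E n"
  shows "\<forall>vs ws. matching_ordering V E vs \<and> matching_ordering V E ws \<longrightarrow> vs = ws"
proof (intro allI impI)
  fix vs ws assume "matching_ordering V E vs \<and> matching_ordering V E ws"
  then have vs: "matching_ordering V E vs" and ws: "matching_ordering V E ws" by simp_all
  then have ord: "ordering_of V vs" "ordering_of V ws" unfolding matching_ordering_def by simp_all
  have tour: "tournament V E" using assms(1) unfolding prime_tournament_def by blast
  have "\<not> card V \<le> 2" using small_tournament_iso_to_P[OF tour] assms(2) by blast
  moreover have "length vs = card V" "length ws = card V"
    using ord distinct_card unfolding ordering_of_def by metis+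
  ultimately interpret matching_order_pair V E "position vs" "position ws" "card V"
    using assms(1) bij_betw_position[OF ord(1)] bij_betw_position[OF ord(2)]
      matching_ordering_backedge_unique[OF vs] matching_ordering_backedge_unique[OF ws]
    by unfold_locales auto
  have no_inversion: "\<not> inverted V (position vs) (position ws) x y" for x y
  proof
    assume "inverted V (position vs) (position ws) x y"
    then interpret inverted_matching_order_pair V E "position vs" "position ws" "card V"
      by unfold_locales blast
    show False using iso_to_P assms(2) by blast
  qed
  show "vs = ws"
    using ordering_eq_if_position_eq[OF ord] positions_eq_if_no_inversion[OF p_bij q_bij no_inversion]
    by blast
qed

end
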